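(* Let $p(g)=y^{a(g)}x^{b(g)}$ be a continuous $1$-cocycle of $G_k$ with values in $\pi/[\pi]_2$, so that $b,a:G_k\to\hat{\mathbb Z}(1)$ are cocycles. Then $\delta_2(p)=b\cup a$ in ${\rm H}^2(G_k,\hat{\mathbb Z}(2))$.
   Context: Let $k$ be either a subfield of $\mathbb C$ or the completion of a number field $F\subset\mathbb C$ at a place, with fixed embeddings $\mathbb C\supset\overline{\mathbb Q}\subseteq\overline k$; $G_k=\operatorname{Gal}(\overline k/k)$, $\chi$ the cyclotomic character. $\pi=\pi_1^{et}(\mathbb P^1_{\overline k}-\{0,1,\infty\},\overrightarrow{01})\cong\langle x,y\rangle^\wedge$ (profinite free group; $x$ loop around $0$, $y$ loop around $1$), with $G_k$-action $\sigma(x)=x^{\chi(\sigma)}$, $\sigma(y)=\mathfrak f(\sigma)^{-1}y^{\chi(\sigma)}\mathfrak f(\sigma)$ for a cocycle $\mathfrak f:G_k\to[\pi]_2$. Lower central series $[\pi]_1=\pi$, $[\pi]_{n+1}=\overline{[\pi,[\pi]_n]}$, $[u,v]=uvu^{-1}v^{-1}$. $\pi/[\pi]_2\cong\hat{\mathbb Z}(1)x\oplus\hat{\mathbb Z}(1)y$ and $[\pi]_2/[\pi]_3\cong\hat{\mathbb Z}(2)$ via the basis $[x,y]$, where $\hat{\mathbb Z}(n)$ is $\hat{\mathbb Z}$ with action through $\chi^n$. $\delta_2:{\rm H}^1(G_k,\pi/[\pi]_2)\to{\rm H}^2(G_k,[\pi]_2/[\pi]_3)$ is the connecting map of $1\to[\pi]_2/[\pi]_3\to\pi/[\pi]_3\to\pi/[\pi]_2\to1$.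 Cup product of inhomogeneous cochains: $(b\cup a)(g,h)=b(g)\,\chi(g)a(h)$. *)

theory Defs
  imports "HOL-Analysis.Analysis" "HOL-Algebra.Group"
begin

text \<open>Zhat is realised as the inverse limit of the rings Z/(n!) (n = 0,1,2,...):
  an element is a compatible sequence of residues a n in {0..<n!}.\<close>

type_synonym zhat = "nat \<Rightarrow> int"

definition zhat_set :: "zhat set" where
  "zhat_set = {a. (\<forall>n. 0 \<le> a n \<and> a n < int (fact n)) \<and>
                  (\<forall>m n. m \<le> n \<longrightarrow> a m = a n mod int (fact m))}"

definition zadd :: "zhat \<Rightarrow> zhat \<Rightarrow> zhat" where
  "zadd a b = (\<lambda>n. (a n + b n) mod int (fact n))"

definition zmul :: "zhat \<Rightarrow> zhat \<Rightarrow> zhat" where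
  "zmul a b = (\<lambda>n. (a n * b n) mod int (fact n))"

definition zneg :: "zhat \<Rightarrow> zhat" where
  "zneg a = (\<lambda>n. (- a n) mod int (fact n))"

definition zzero :: zhat where
  "zzero = (\<lambda>n. 0)"

definition zone :: zhat where
  "zone = (\<lambda>n. 1 mod int (fact n))"

definition zhat_top :: "zhat topology" where
  "zhat_top = subtopology
     (product_topology (\<lambda>n. discrete_topology {0..<int (fact n)}) UNIV) zhat_set"

definition zhat_unit :: "zhat \<Rightarrow> bool" where
  "zhat_unit u \<longleftrightarrow> u \<in> zhat_set \<and> (\<exists>v\<in>zhat_set. zmul u v = zone)"

definition totally_disconnected_space :: "'a topology \<Rightarrow> bool" where
  "totally_disconnected_space T \<longleftrightarrow>
     (\<forall>C. connectedin T C \<longrightarrow> (\<exists>x. C \<subseteq> {x}))"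

definition profinite_group :: "('g, 'm) monoid_scheme \<Rightarrow> 'g topology \<Rightarrow> bool" where
  "profinite_group G T \<longleftrightarrow> group G \<and> topspace T = carrier G \<and>
     continuous_map (prod_topology T T) T (\<lambda>(g, h). g \<otimes>\<^bsub>G\<^esub> h) \<and>
     continuous_map T T (\<lambda>g. inv\<^bsub>G\<^esub> g) \<and>
     compact_space T \<and> Hausdorff_space T \<and> totally_disconnected_space T"

text \<open>A continuous character chi : G -> Zhat^x (playing the role of the cyclotomic character).\<close>
definition zhat_character :: "('g, 'm) monoid_scheme \<Rightarrow> 'g topology \<Rightarrow> ('g \<Rightarrow> zhat) \<Rightarrow> bool" where
  "zhat_character G T chi \<longleftrightarrow> continuous_map T zhat_top chi \<and>
     (\<forall>g\<in>carrier G. zhat_unit (chi g)) \<and>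
     (\<forall>g\<in>carrier G. \<forall>h\<in>carrier G. chi (g \<otimes>\<^bsub>G\<^esub> h) = zmul (chi g) (chi h))"

text \<open>pi/[pi]_2 = Zhat(1) x (+) Zhat(1) y, written as pairs (coefficient of x, coefficient of y).
  The Galois action is multiplication by chi on both coordinates.\<close>

type_synonym piab = "zhat \<times> zhat"

definition piab_add :: "piab \<Rightarrow> piab \<Rightarrow> piab" where
  "piab_add u v = (zadd (fst u) (fst v), zadd (snd u) (snd v))"

definition piab_act :: "('g \<Rightarrow> zhat) \<Rightarrow> 'g \<Rightarrow> piab \<Rightarrow> piab" where
  "piab_act chi g u = (zmul (chi g) (fst u), zmul (chi g) (snd u))"

text \<open>pi/[pi]_3: the free class-2 nilpotent profinite group on x, y, i.e. the Heisenberg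
  group over Zhat. The triple (i, j, k) stands for x^i y^j [x,y]^k, where [x,y] = x y x^-1 y^-1
  is central; hence y^j x^i = x^i y^j [x,y]^(-ij).\<close>

type_synonym pi3 = "zhat \<times> zhat \<times> zhat"

definition pi3_mult :: "pi3 \<Rightarrow> pi3 \<Rightarrow> pi3" where
  "pi3_mult u v = (case u of (i, j, k) \<Rightarrow> case v of (i', j', k') \<Rightarrow>
      (zadd i i', zadd j j', zadd (zadd k k') (zneg (zmul j i'))))"

definition pi3_inv :: "pi3 \<Rightarrow> pi3" where
  "pi3_inv u = (case u of (i, j, k) \<Rightarrow> (zneg i, zneg j, zneg (zadd k (zmul i j))))"

text \<open>Galois action on pi/[pi]_3: sigma(x) = x^chi, sigma(y) = f^-1 y^chi f = y^chi modulo [pi]_3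
  (conjugation by f in [pi]_2 is trivial mod [pi]_3); hence sigma([x,y]) = [x,y]^(chi^2).\<close>
definition pi3_act :: "('g \<Rightarrow> zhat) \<Rightarrow> 'g \<Rightarrow> pi3 \<Rightarrow> pi3" where
  "pi3_act chi g u = (case u of (i, j, k) \<Rightarrow>
      (zmul (chi g) i, zmul (chi g) j, zmul (zmul (chi g) (chi g)) k))"

definition pi3_proj :: "pi3 \<Rightarrow> piab" where
  "pi3_proj u = (fst u, fst (snd u))"

definition pi3_comm :: "zhat \<Rightarrow> pi3" where
  "pi3_comm k = (zzero, zzero, k)"

definition piab_cocycle :: "('g, 'm) monoid_scheme \<Rightarrow> 'g topology \<Rightarrow> ('g \<Rightarrow> zhat) \<Rightarrow> ('g \<Rightarrow> piab) \<Rightarrow> bool" where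
  "piab_cocycle G T chi p \<longleftrightarrow> continuous_map T (prod_topology zhat_top zhat_top) p \<and>
     (\<forall>g\<in>carrier G. \<forall>h\<in>carrier G. p (g \<otimes>\<^bsub>G\<^esub> h) = piab_add (p g) (piab_act chi g (p h)))"

definition pi3_lift :: "'g topology \<Rightarrow> ('g \<Rightarrow> piab) \<Rightarrow> ('g \<Rightarrow> pi3) \<Rightarrow> bool" where
  "pi3_lift T p P \<longleftrightarrow>
     continuous_map T (prod_topology zhat_top (prod_topology zhat_top zhat_top)) P \<and>
     (\<forall>g\<in>topspace T. pi3_proj (P g) = p g)"

definition delta2_cochain :: "('g, 'm) monoid_scheme \<Rightarrow> ('g \<Rightarrow> zhat) \<Rightarrow> ('g \<Rightarrow> pi3) \<Rightarrow> 'g \<Rightarrow> 'g \<Rightarrow> pi3" where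
  "delta2_cochain G chi P g h =
     pi3_mult (pi3_mult (P g) (pi3_act chi g (P h))) (pi3_inv (P (g \<otimes>\<^bsub>G\<^esub> h)))"

definition cup11 :: "('g \<Rightarrow> zhat) \<Rightarrow> ('g \<Rightarrow> zhat) \<Rightarrow> ('g \<Rightarrow> zhat) \<Rightarrow> 'g \<Rightarrow> 'g \<Rightarrow> zhat" where
  "cup11 chi b a g h = zmul (b g) (zmul (chi g) (a h))"

definition coboundary_Z2 :: "('g, 'm) monoid_scheme \<Rightarrow> ('g \<Rightarrow> zhat) \<Rightarrow> ('g \<Rightarrow> zhat) \<Rightarrow> 'g \<Rightarrow> 'g \<Rightarrow> zhat" where
  "coboundary_Z2 G chi c g h =
     zadd (zadd (c g) (zmul (zmul (chi g) (chi g)) (c h))) (zneg (c (g \<otimes>\<^bsub>G\<^esub> h)))"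

definition cohomologous_Z2 :: "('g, 'm) monoid_scheme \<Rightarrow> 'g topology \<Rightarrow> ('g \<Rightarrow> zhat) \<Rightarrow>
    ('g \<Rightarrow> 'g \<Rightarrow> zhat) \<Rightarrow> ('g \<Rightarrow> 'g \<Rightarrow> zhat) \<Rightarrow> bool" where
  "cohomologous_Z2 G T chi u v \<longleftrightarrow>
     (\<exists>c. continuous_map T zhat_top c \<and>
        (\<forall>g\<in>carrier G. \<forall>h\<in>carrier G. u g h = zadd (v g h) (coboundary_Z2 G chi c g h)))"

end

theory Submission
  imports Defs
begin

text \<open>Write a lift of p as P(g) = x^b(g) y^a(g) [x,y]^c(g). In the Heisenberg group
  pi/[pi]_3 the connecting cochain P(g) g(P(h)) P(gh)^-1 is central, and moving y^a(g) past
  x^(chi(g) b(h)) shows that its commutator exponent is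
  c(g) + chi(g)^2 c(h) - c(gh) - chi(g) a(g) b(h).
  By the cocycle relations for a and b this is b(g) chi(g) a(h) plus the coboundary of the
  continuous cochain c + a b. This is an identity of cochains.\<close>

definition zhat_lift2 :: "(int \<Rightarrow> int \<Rightarrow> int) \<Rightarrow> zhat \<Rightarrow> zhat \<Rightarrow> zhat" where
  "zhat_lift2 H u v = (\<lambda>n. H (u n) (v n) mod int (fact n))"

lemma zadd_eq_zhat_lift2: "zadd = zhat_lift2 (+)"
  by (simp add: fun_eq_iff zadd_def zhat_lift2_def)

lemma zmul_eq_zhat_lift2: "zmul = zhat_lift2 (*)"
  by (simp add: fun_eq_iff zmul_def zhat_lift2_def)

lemma zhat_lift2_in_zhat_set:
  assumes H_mod: "\<And>x y m. H (x mod m) (y mod m) mod m = H x y mod m"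
    and u: "u \<in> zhat_set" and v: "v \<in> zhat_set"
  shows "zhat_lift2 H u v \<in> zhat_set"
  unfolding zhat_set_def mem_Collect_eq
proof (intro conjI allI impI)
  fix m n :: nat
  assume "m \<le> n"
  then have "int (fact m) dvd int (fact n)"
    by (simp add: fact_dvd)
  moreover have "u m = u n mod int (fact m)" "v m = v n mod int (fact m)"
    using u v \<open>m \<le> n\<close> unfolding zhat_set_def by blast+
  ultimately show "zhat_lift2 H u v m = zhat_lift2 H u v n mod int (fact m)"
    by (simp add: zhat_lift2_def H_mod mod_mod_cancel)
qed (simp_all add: zhat_lift2_def)

lemma continuous_map_zhat_top_iff:
  "continuous_map T zhat_top f \<longleftrightarrow>
    f \<in> topspace T \<rightarrow> zhat_set \<and>
    (\<forall>n. continuous_map T (discrete_topology {0..<int (fact n)}) (\<lambda>x. f x n))"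
  unfolding zhat_top_def continuous_map_in_subtopology continuous_map_componentwise_UNIV
  by blast

lemma continuous_map_zhat_component:
  assumes "continuous_map T zhat_top f"
  shows "continuous_map T (discrete_topology {0..<int (fact n)}) (\<lambda>x. f x n)"
  using assms by (simp add: continuous_map_zhat_top_iff)

lemma continuous_map_zhat_lift2_component:
  assumes f: "continuous_map T zhat_top f" and g: "continuous_map T zhat_top g"
  shows "continuous_map T (discrete_topology {0..<int (fact n)})
           (\<lambda>x. zhat_lift2 H (f x) (g x) n)"
proof -
  let ?R = "{0..<int (fact n)}"
  have "continuous_map T (prod_topology (discrete_topology ?R) (discrete_topology ?R))
          (\<lambda>x. (f x n, g x n))"
    using continuous_map_zhat_component[OF f] continuous_map_zhat_component[OF g]
    by (simp add: continuous_map_pairwise o_def)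
  then have "continuous_map T (discrete_topology (?R \<times> ?R)) (\<lambda>x. (f x n, g x n))"
    by (simp add: prod_topology_discrete_topology)
  moreover have "continuous_map (discrete_topology (?R \<times> ?R)) (discrete_topology ?R)
                   (\<lambda>(s, t). H s t mod int (fact n))"
    unfolding continuous_map_from_discrete_topology topspace_discrete_topology
    by (simp add: Pi_iff split_beta)
  ultimately show ?thesis
    by (rule continuous_map_compose[THEN continuous_map_eq]) (simp add: zhat_lift2_def)
qed

lemma continuous_map_zhat_lift2:
  assumes H_mod: "\<And>x y m. H (x mod m) (y mod m) mod m = H x y mod m"
    and f: "continuous_map T zhat_top f" and g: "continuous_map T zhat_top g"
  shows "continuous_map T zhat_top (\<lambda>x. zhat_lift2 H (f x) (g x))"
  using f g zhat_lift2_in_zhat_set[where H = H, OF H_mod]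
    continuous_map_zhat_lift2_component[OF f g]
  by (auto simp: continuous_map_zhat_top_iff Pi_iff)

lemma continuous_map_zadd:
  "continuous_map T zhat_top f \<Longrightarrow> continuous_map T zhat_top g \<Longrightarrow>
    continuous_map T zhat_top (\<lambda>x. zadd (f x) (g x))"
  unfolding zadd_eq_zhat_lift2 by (rule continuous_map_zhat_lift2) (simp add: mod_add_eq)

lemma continuous_map_zmul:
  "continuous_map T zhat_top f \<Longrightarrow> continuous_map T zhat_top g \<Longrightarrow>
    continuous_map T zhat_top (\<lambda>x. zmul (f x) (g x))"
  unfolding zmul_eq_zhat_lift2 by (rule continuous_map_zhat_lift2) (simp add: mod_mult_eq)

lemma zadd_zneg_self: "zadd u (zneg u) = zzero"
  by (simp add: fun_eq_iff zadd_def zneg_def zzero_def mod_add_right_eq)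

text \<open>For P(g) = (B1, A1, C1), P(h) = (B2, A2, C2) and c(gh) = C3, the right-hand side is
  (b cup a)(g,h) + d(c + a b)(g,h) written out. Levelwise each coordinate is a polynomial identity
  in \<int>/n!, so it suffices to push all reductions mod n! outwards before normalising.\<close>
lemma pi3_connecting_element:
  "pi3_mult (pi3_mult (B1, A1, C1) (pi3_act chi g (B2, A2, C2)))
     (pi3_inv (zadd B1 (zmul (chi g) B2), zadd A1 (zmul (chi g) A2), C3))
   = pi3_comm (zadd (zmul B1 (zmul (chi g) A2))
       (zadd (zadd (zadd C1 (zmul A1 B1)) (zmul (zmul (chi g) (chi g)) (zadd C2 (zmul A2 B2))))
          (zneg (zadd C3 (zmul (zadd A1 (zmul (chi g) A2)) (zadd B1 (zmul (chi g) B2)))))))"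
proof -
  have commutator_exponent:
    "zadd (zadd (zadd (zadd C1 (zmul (zmul (chi g) (chi g)) C2)) (zneg (zmul A1 (zmul (chi g) B2))))
         (zneg (zadd C3 (zmul (zadd B1 (zmul (chi g) B2)) (zadd A1 (zmul (chi g) A2))))))
       (zneg (zmul (zadd A1 (zmul (chi g) A2)) (zneg (zadd B1 (zmul (chi g) B2)))))
     = zadd (zmul B1 (zmul (chi g) A2))
         (zadd (zadd (zadd C1 (zmul A1 B1)) (zmul (zmul (chi g) (chi g)) (zadd C2 (zmul A2 B2))))
            (zneg (zadd C3 (zmul (zadd A1 (zmul (chi g) A2)) (zadd B1 (zmul (chi g) B2))))))"
    unfolding fun_eq_iff zadd_def zmul_def zneg_def
    by (simp only: mod_simps) (simp add: algebra_simps)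
  show ?thesis
    unfolding pi3_mult_def pi3_act_def pi3_inv_def pi3_comm_def prod.case fst_conv snd_conv
    by (simp only: zadd_zneg_self commutator_exponent)
qed

lemma piab_cocycle_coordinates:
  assumes "piab_cocycle G T chi p" and "g \<in> carrier G" "h \<in> carrier G"
  shows "fst (p (g \<otimes>\<^bsub>G\<^esub> h)) = zadd (fst (p g)) (zmul (chi g) (fst (p h)))"
    and "snd (p (g \<otimes>\<^bsub>G\<^esub> h)) = zadd (snd (p g)) (zmul (chi g) (snd (p h)))"
  using assms by (simp_all add: piab_cocycle_def piab_add_def piab_act_def)

lemma pi3_lift_coordinates:
  "pi3_lift T p P \<Longrightarrow> g \<in> topspace T \<Longrightarrow> P g = (fst (p g), snd (p g), snd (snd (P g)))"
  by (auto simp: pi3_lift_def pi3_proj_def prod_eq_iff)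

lemma continuous_map_pi3_lift_correction:
  assumes "piab_cocycle G T chi p" and "pi3_lift T p P"
  shows "continuous_map T zhat_top (\<lambda>g. zadd (snd (snd (P g))) (zmul (snd (p g)) (fst (p g))))"
proof -
  have p: "continuous_map T (prod_topology zhat_top zhat_top) p"
    and P: "continuous_map T (prod_topology zhat_top (prod_topology zhat_top zhat_top)) P"
    using assms by (simp_all add: piab_cocycle_def pi3_lift_def)
  have "continuous_map T zhat_top (snd \<circ> (snd \<circ> P))"
    using P by (intro continuous_map_snd_of)
  moreover have "continuous_map T zhat_top (snd \<circ> p)" "continuous_map T zhat_top (fst \<circ> p)"
    using p by (rule continuous_map_snd_of, rule continuous_map_fst_of)
  ultimately show ?thesis
    unfolding o_def by (intro continuous_map_zadd continuous_map_zmul) assumption+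
qed

lemma delta2_cochain_pi3_lift:
  assumes "monoid G" and "topspace T = carrier G"
    and cocycle: "piab_cocycle G T chi p" and lift: "pi3_lift T p P"
    and g: "g \<in> carrier G" and h: "h \<in> carrier G"
  shows "delta2_cochain G chi P g h
       = pi3_comm (zadd (cup11 chi (fst \<circ> p) (snd \<circ> p) g h)
           (coboundary_Z2 G chi (\<lambda>g. zadd (snd (snd (P g))) (zmul (snd (p g)) (fst (p g)))) g h))"
proof -
  have gh: "g \<otimes>\<^bsub>G\<^esub> h \<in> carrier G"
    using \<open>monoid G\<close> g h by (rule monoid.m_closed)
  define c where "c x = snd (snd (P x))" for x
  have P: "P x = (fst (p x), snd (p x), c x)" if "x \<in> carrier G" for x
    using pi3_lift_coordinates[OF lift] that \<open>topspace T = carrier G\<close> by (simp add: c_def)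
  have "delta2_cochain G chi P g h
      = pi3_comm (zadd (cup11 chi (fst \<circ> p) (snd \<circ> p) g h)
          (coboundary_Z2 G chi (\<lambda>g. zadd (c g) (zmul (snd (p g)) (fst (p g)))) g h))"
    unfolding delta2_cochain_def P[OF g] P[OF h] P[OF gh]
      piab_cocycle_coordinates[OF cocycle g h] cup11_def coboundary_Z2_def o_def
    by (rule pi3_connecting_element)
  then show ?thesis
    by (simp add: c_def)
qed

theorem proposition12p1:
  fixes G :: "('g, 'm) monoid_scheme" and T :: "'g topology"
    and chi :: "'g \<Rightarrow> zhat" and p :: "'g \<Rightarrow> piab" and a b :: "'g \<Rightarrow> zhat"
  assumes "profinite_group G T"
    and "zhat_character G T chi"
    and "piab_cocycle G T chi p"
    and "\<And>g. b g = fst (p g)"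
    and "\<And>g. a g = snd (p g)"
  shows "\<forall>P. pi3_lift T p P \<longrightarrow>
           (\<exists>\<delta>. (\<forall>g\<in>carrier G. \<forall>h\<in>carrier G. delta2_cochain G chi P g h = pi3_comm (\<delta> g h)) \<and>
                cohomologous_Z2 G T chi \<delta> (cup11 chi b a))"
proof (intro allI impI)
  fix P assume lift: "pi3_lift T p P"
  have "monoid G" and carrier: "topspace T = carrier G"
    using assms(1) by (auto simp: profinite_group_def group.is_monoid)
  have ab: "b = fst \<circ> p" "a = snd \<circ> p"
    using assms(4,5) by (auto simp: fun_eq_iff)
  define c where "c = (\<lambda>g. zadd (snd (snd (P g))) (zmul (snd (p g)) (fst (p g))))"
  have "continuous_map T zhat_top c"
    unfolding c_def using assms(3) lift by (rule continuous_map_pi3_lift_correction)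
  moreover have "delta2_cochain G chi P g h
      = pi3_comm (zadd (cup11 chi b a g h) (coboundary_Z2 G chi c g h))"
    if "g \<in> carrier G" "h \<in> carrier G" for g h
    unfolding ab c_def using \<open>monoid G\<close> carrier assms(3) lift that
    by (rule delta2_cochain_pi3_lift)
  ultimately show "\<exists>\<delta>. (\<forall>g\<in>carrier G. \<forall>h\<in>carrier G.
        delta2_cochain G chi P g h = pi3_comm (\<delta> g h)) \<and> cohomologous_Z2 G T chi \<delta> (cup11 chi b a)"
    unfolding cohomologous_Z2_def
    by (intro exI[of _ "\<lambda>g h. zadd (cup11 chi b a g h) (coboundary_Z2 G chi c g h)"]) blast
qed

end
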